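(* Let $a_1,a_2,a_3$ be the parameters of a pure three-mode Gaussian state in the standard form described below. Suppose that for every permutation $(i,j,k)$ of $(1,2,3)$, $$|a_i-a_j|+1<a_k<\sqrt{a_i^2+a_j^2-1}.$$ Then: (i) $a_k>\alpha_k$ for every $k=1,2,3$. (ii) For every choice of focus mode $i$, the residual tripartite Rényi-2 entanglement $$\mathcal E_2(\rho_{A_i:A_j:A_k})=\mathcal E_2(\rho_{A_i:A_jA_k})-\mathcal E_2(\rho_{A_i:A_j})-\mathcal E_2(\rho_{A_i:A_k})$$ equals $\tfrac12\ln\!\big(64a_1^2a_2^2a_3^2/\beta^2\big)$. In particular it does not depend on the choice of focus mode.
   Context: Any pure three-mode Gaussian state is, up to local unitaries, described by a covariance matrix $\boldsymbol\sigma_{A_1A_2A_3}$ in the following standard form. Its diagonal $2\times2$ blocks are $a_i\mathbf I$ for $i=1,2,3$. Its off-diagonal block between modes $A_j$ and $A_k$ is $\mathrm{diag}(c_i^+,c_i^-)$, where $\{i,j,k\}=\{1,2,3\}$. The coefficients are given by $$4\sqrt{a_ja_k}\,c_i^\pm=\sqrt{[(a_i-1)^2-(a_j-a_k)^2][(a_i+1)^2-(a_j-a_k)^2]}\pm\sqrt{[(a_i-1)^2-(a_j+a_k)^2][(a_i+1)^2-(a_j+a_k)^2]},$$ with $|a_j-a_k|+1\le a_i\le a_j+a_k-1$ for all permutations. The covariance matrix convention is $\sigma_{ij}=\langle \hat R_i\hat R_j+\hat R_j\hat R_i\rangle-2\langle\hat R_i\rangle\langle\hat R_j\rangle$. The Gaussian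 Rényi-2 entanglement is $\mathcal E_2(\rho_{X:Y})=\inf\tfrac12\ln\det\boldsymbol\gamma_X$. The infimum is over bona fide pure covariance matrices $\boldsymbol\gamma_{XY}$ (real symmetric, $\boldsymbol\gamma_{XY}+i\boldsymbol\Omega\ge0$, $\det\boldsymbol\gamma_{XY}=1$) with $\boldsymbol\gamma_{XY}\le\boldsymbol\sigma_{XY}$. For the pure state above, $\mathcal E_2(\rho_{A_i:A_jA_k})=\tfrac12\ln\det(a_i\mathbf I)=\ln a_i$. Known fact used as a standing input: the two-mode reduced entanglement is $\mathcal E_2(\rho_{A_i:A_j})=\tfrac12\ln g_k$, where - $g_k=1$ if $a_k\ge\sqrt{a_i^2+a_j^2-1}$; - $g_k=\beta/(8a_k^2)$ if $\alpha_k<a_k<\sqrt{a_i^2+a_j^2-1}$; - $g_k=\big((a_i^2-a_j^2)/(a_k^2-1)\big)^2$ if $a_k\le\alpha_k$. Here $$\alpha_k=\sqrt{\frac{2(a_i^2+a_j^2)+(a_i^2-a_j^2)^2+|a_i^2-a_j^2|\sqrt{(a_i^2-a_j^2)^2+8(a_i^2+a_j^2)}}{2(a_i^2+a_j^2)}},$$ $$\beta=2a_1^2+2a_2^2+2a_3^2+2a_1^2a_2^2+2a_1^2a_3^2+2a_2^2a_3^2-a_1^4-a_2^4-a_3^4-\sqrt\delta-1,$$ $$\delta=\prod_{\mu,\nu\in\{0,1\}}\big[(a_1+(-1)^\mu a_2+(-1)^\nu a_3)^2-1\big].$$ *)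

theory Defs
  imports Complex_Main
begin

definition is_perm3 :: "nat \<Rightarrow> nat \<Rightarrow> nat \<Rightarrow> bool" where
  "is_perm3 i j k \<longleftrightarrow> i \<in> {1,2,3} \<and> j \<in> {1,2,3} \<and> k \<in> {1,2,3} \<and> i \<noteq> j \<and> j \<noteq> k \<and> i \<noteq> k"

definition pure3_params :: "(nat \<Rightarrow> real) \<Rightarrow> bool" where
  "pure3_params a \<longleftrightarrow> (\<forall>i j k. is_perm3 i j k \<longrightarrow>
      \<bar>a j - a k\<bar> + 1 \<le> a i \<and> a i \<le> a j + a k - 1)"

text \<open>alpha_k, where i,j are the other two modes.\<close>
definition alpha3 :: "(nat \<Rightarrow> real) \<Rightarrow> nat \<Rightarrow> nat \<Rightarrow> real" where
  "alpha3 a i j = sqrt ((2 * ((a i)\<^sup>2 + (a j)\<^sup>2) + ((a i)\<^sup>2 - (a j)\<^sup>2)\<^sup>2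
       + \<bar>(a i)\<^sup>2 - (a j)\<^sup>2\<bar> * sqrt (((a i)\<^sup>2 - (a j)\<^sup>2)\<^sup>2 + 8 * ((a i)\<^sup>2 + (a j)\<^sup>2)))
       / (2 * ((a i)\<^sup>2 + (a j)\<^sup>2)))"

definition delta3 :: "(nat \<Rightarrow> real) \<Rightarrow> real" where
  "delta3 a = ((a 1 + a 2 + a 3)\<^sup>2 - 1) * ((a 1 + a 2 - a 3)\<^sup>2 - 1)
             * ((a 1 - a 2 + a 3)\<^sup>2 - 1) * ((a 1 - a 2 - a 3)\<^sup>2 - 1)"

definition beta3 :: "(nat \<Rightarrow> real) \<Rightarrow> real" where
  "beta3 a = 2 * (a 1)\<^sup>2 + 2 * (a 2)\<^sup>2 + 2 * (a 3)\<^sup>2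
     + 2 * (a 1)\<^sup>2 * (a 2)\<^sup>2 + 2 * (a 1)\<^sup>2 * (a 3)\<^sup>2 + 2 * (a 2)\<^sup>2 * (a 3)\<^sup>2
     - (a 1)^4 - (a 2)^4 - (a 3)^4 - sqrt (delta3 a) - 1"

text \<open>g_k for the pair (i,j), k the remaining mode.\<close>
definition g3 :: "(nat \<Rightarrow> real) \<Rightarrow> nat \<Rightarrow> nat \<Rightarrow> nat \<Rightarrow> real" where
  "g3 a i j k =
     (if a k \<ge> sqrt ((a i)\<^sup>2 + (a j)\<^sup>2 - 1) then 1
      else if alpha3 a i j < a k then beta3 a / (8 * (a k)\<^sup>2)
      else (((a i)\<^sup>2 - (a j)\<^sup>2) / ((a k)\<^sup>2 - 1))\<^sup>2)"

text \<open>Gaussian Renyi-2 entanglement of the pure state, via the standing inputs: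
  E2(A_i : A_j A_k) = ln a_i and E2(A_i : A_j) = (1/2) ln g_k.\<close>
definition E2_bip :: "(nat \<Rightarrow> real) \<Rightarrow> nat \<Rightarrow> real" where
  "E2_bip a i = ln (a i)"

definition E2_two :: "(nat \<Rightarrow> real) \<Rightarrow> nat \<Rightarrow> nat \<Rightarrow> nat \<Rightarrow> real" where
  "E2_two a i j k = ln (g3 a i j k) / 2"

definition E2_res :: "(nat \<Rightarrow> real) \<Rightarrow> nat \<Rightarrow> nat \<Rightarrow> nat \<Rightarrow> real" where
  "E2_res a i j k = E2_bip a i - E2_two a i j k - E2_two a i k j"

end

theory Submission
  imports Defs
begin

text \<open>In the regime |a_i - a_j| + 1 < a_k < sqrt (a_i^2 + a_j^2 - 1) every two-mode reduction
  falls into the intermediate branch of g_k.  For (i) one squares away the two square roots in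
  alpha_k; what remains is the polynomial inequality d^2 (r^2 + 1) < s (r^2 - 1)^2 with
  s = p^2 + q^2 and d = p^2 - q^2, which follows from |d| < r^2 - 1 and p + q \<ge> r + 1.  For (ii),
  g_j g_k = beta^2 / (64 a_j^2 a_k^2), so the residual entanglement is
  ln (a_i^2 / (g_j g_k)) / 2 = ln (64 a_1^2 a_2^2 a_3^2 / beta^2) / 2, which is symmetric in the
  modes; beta > 0 because delta = P^2 - 64 a_1^2 a_2^2 a_3^2 for the polynomial part P of beta.\<close>

lemma sq_diff_squares_bound:
  fixes p q r :: real
  assumes "0 < r" and diff: "\<bar>p\<^sup>2 - q\<^sup>2\<bar> < r\<^sup>2 - 1" and sum: "r + 1 \<le> p + q"
  shows "(p\<^sup>2 - q\<^sup>2)\<^sup>2 * (r\<^sup>2 + 1) < (p\<^sup>2 + q\<^sup>2) * (r\<^sup>2 - 1)\<^sup>2"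
proof -
  define s d Z W where "s = p\<^sup>2 + q\<^sup>2" and "d = p\<^sup>2 - q\<^sup>2" and "Z = r\<^sup>2" and "W = (p + q)\<^sup>2"
  define B where "B = (Z - 1)\<^sup>2 - 2 * W * (Z + 1)"
  have Z1: "1 < Z" using diff unfolding Z_def by linarith
  have d2: "d\<^sup>2 < (Z - 1)\<^sup>2"
    using diff Z1 abs_le_square_iff[of "Z - 1" d] unfolding d_def Z_def by auto
  have W_ge: "Z + 2 * r + 1 \<le> W"
  proof -
    have "(r + 1)\<^sup>2 \<le> (p + q)\<^sup>2" using sum \<open>0 < r\<close> by (intro power_mono) auto
    then show ?thesis unfolding W_def Z_def by (simp add: power2_eq_square algebra_simps)
  qed
  have "0 < W" using W_ge Z1 \<open>0 < r\<close> by linarith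
  \<comment> \<open>Multiplying by W = (p+q)^2 and using 2 W s = d^2 + W^2 separates the terms.\<close>
  have scaled: "2 * W * (s * (Z - 1)\<^sup>2 - d\<^sup>2 * (Z + 1)) = W\<^sup>2 * (Z - 1)\<^sup>2 + d\<^sup>2 * B"
    unfolding B_def W_def s_def d_def by (simp add: power2_eq_square algebra_simps)
  have "0 < W\<^sup>2 * (Z - 1)\<^sup>2 + d\<^sup>2 * B"
  proof (cases "0 \<le> B")
    case True
    then show ?thesis using \<open>0 < W\<close> Z1 by (simp add: add_pos_nonneg)
  next
    case False
    have "(Z - 1)\<^sup>2 * B < d\<^sup>2 * B" using d2 False by (intro mult_strict_right_mono_neg) auto
    moreover have "(2 * r)\<^sup>2 \<le> (W - Z - 1)\<^sup>2" using W_ge \<open>0 < r\<close> by (intro power_mono) auto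
    then have "0 \<le> (Z - 1)\<^sup>2 * ((W - Z - 1)\<^sup>2 - 4 * Z)"
      unfolding Z_def by (simp add: power2_eq_square)
    moreover have "(Z - 1)\<^sup>2 * ((W - Z - 1)\<^sup>2 - 4 * Z) = W\<^sup>2 * (Z - 1)\<^sup>2 + (Z - 1)\<^sup>2 * B"
      unfolding B_def by (simp add: power2_eq_square algebra_simps)
    ultimately show ?thesis by linarith
  qed
  then have "0 < 2 * W * (s * (Z - 1)\<^sup>2 - d\<^sup>2 * (Z + 1))" by (simp only: scaled)
  then have "0 < s * (Z - 1)\<^sup>2 - d\<^sup>2 * (Z + 1)"
    using \<open>0 < W\<close> by (simp add: zero_less_mult_iff)
  then show ?thesis unfolding s_def d_def Z_def by simp
qed

lemma alpha3_less:
  fixes a :: "nat \<Rightarrow> real"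
  assumes "0 < a i" "0 < a j" "0 < r"
    and diff: "\<bar>(a i)\<^sup>2 - (a j)\<^sup>2\<bar> < r\<^sup>2 - 1" and sum: "r + 1 \<le> a i + a j"
  shows "alpha3 a i j < r"
proof -
  define s d where "s = (a i)\<^sup>2 + (a j)\<^sup>2" and "d = (a i)\<^sup>2 - (a j)\<^sup>2"
  define L where "L = 2 * s * (r\<^sup>2 - 1) - d\<^sup>2"
  have "0 < s" unfolding s_def using assms by (intro add_pos_pos) auto
  have d_le_s: "\<bar>d\<bar> \<le> s" unfolding d_def s_def by (simp add: abs_le_iff)
  have d_lt: "\<bar>d\<bar> < r\<^sup>2 - 1" using diff unfolding d_def .
  have F: "d\<^sup>2 * (r\<^sup>2 + 1) < s * (r\<^sup>2 - 1)\<^sup>2"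
    using sq_diff_squares_bound[OF \<open>0 < r\<close> diff sum] unfolding s_def d_def .
  have "d\<^sup>2 < 2 * s * (r\<^sup>2 - 1)"
  proof -
    have "d\<^sup>2 = \<bar>d\<bar> * \<bar>d\<bar>" by (simp add: power2_eq_square)
    also have "\<dots> \<le> s * (r\<^sup>2 - 1)" using d_le_s d_lt by (intro mult_mono) auto
    also have "\<dots> < 2 * s * (r\<^sup>2 - 1)" using \<open>0 < s\<close> d_lt by simp
    finally show ?thesis .
  qed
  then have "0 < L" unfolding L_def by simp
  have "d\<^sup>2 * (d\<^sup>2 + 8 * s) < L\<^sup>2"
  proof -
    have "L\<^sup>2 - d\<^sup>2 * (d\<^sup>2 + 8 * s) = 4 * s * (s * (r\<^sup>2 - 1)\<^sup>2 - d\<^sup>2 * (r\<^sup>2 + 1))"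
      unfolding L_def by (simp add: power2_eq_square algebra_simps)
    moreover have "0 < 4 * s * (s * (r\<^sup>2 - 1)\<^sup>2 - d\<^sup>2 * (r\<^sup>2 + 1))" using \<open>0 < s\<close> F by simp
    ultimately show ?thesis by linarith
  qed
  then have "\<bar>d\<bar> * sqrt (d\<^sup>2 + 8 * s) < L"
    using \<open>0 < L\<close> real_less_lsqrt[of L "d\<^sup>2 * (d\<^sup>2 + 8 * s)"] by (simp add: real_sqrt_mult)
  then have "(2 * s + d\<^sup>2 + \<bar>d\<bar> * sqrt (d\<^sup>2 + 8 * s)) / (2 * s) < r\<^sup>2"
    using \<open>0 < s\<close> unfolding L_def by (simp add: divide_less_eq algebra_simps)
  then have "sqrt ((2 * s + d\<^sup>2 + \<bar>d\<bar> * sqrt (d\<^sup>2 + 8 * s)) / (2 * s)) < r"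
    using \<open>0 < r\<close> by (simp add: real_less_lsqrt)
  then show ?thesis unfolding alpha3_def s_def d_def .
qed

definition beta_poly :: "(nat \<Rightarrow> real) \<Rightarrow> real" where
  "beta_poly a = 2 * (a 1)\<^sup>2 + 2 * (a 2)\<^sup>2 + 2 * (a 3)\<^sup>2
     + 2 * (a 1)\<^sup>2 * (a 2)\<^sup>2 + 2 * (a 1)\<^sup>2 * (a 3)\<^sup>2 + 2 * (a 2)\<^sup>2 * (a 3)\<^sup>2
     - (a 1)^4 - (a 2)^4 - (a 3)^4 - 1"

lemma beta3_eq_beta_poly: "beta3 a = beta_poly a - sqrt (delta3 a)"
  unfolding beta3_def beta_poly_def by simp

lemma delta3_eq_beta_poly:
  "delta3 a = (beta_poly a)\<^sup>2 - 64 * (a 1)\<^sup>2 * (a 2)\<^sup>2 * (a 3)\<^sup>2"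
  unfolding delta3_def beta_poly_def by algebra

lemma beta_poly_pos:
  fixes a :: "nat \<Rightarrow> real"
  assumes "1 \<le> a 1" "1 \<le> a 2" "1 \<le> a 3"
    and "a 1 < a 2 + a 3" "a 2 < a 1 + a 3" "a 3 < a 1 + a 2"
  shows "0 < beta_poly a"
proof -
  have heron: "0 < (a 1 + a 2 + a 3) * (a 2 + a 3 - a 1) * (a 1 + a 3 - a 2) * (a 1 + a 2 - a 3)"
    using assms by (intro mult_pos_pos) auto
  have "beta_poly a = 2 * (a 1)\<^sup>2 + 2 * (a 2)\<^sup>2 + 2 * (a 3)\<^sup>2 - 1
     + (a 1 + a 2 + a 3) * (a 2 + a 3 - a 1) * (a 1 + a 3 - a 2) * (a 1 + a 2 - a 3)"
    unfolding beta_poly_def by algebra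
  moreover have "1 \<le> (a 1)\<^sup>2" using assms(1) by (simp add: one_le_power)
  moreover have "0 \<le> (a 2)\<^sup>2" "0 \<le> (a 3)\<^sup>2" by simp_all
  ultimately show ?thesis using heron by linarith
qed

lemma beta3_pos:
  fixes a :: "nat \<Rightarrow> real"
  assumes "1 \<le> a 1" "1 \<le> a 2" "1 \<le> a 3"
    and "a 1 < a 2 + a 3" "a 2 < a 1 + a 3" "a 3 < a 1 + a 2"
  shows "0 < beta3 a"
proof -
  have "0 < beta_poly a" using beta_poly_pos[OF assms] .
  moreover have "0 < 64 * (a 1)\<^sup>2 * (a 2)\<^sup>2 * (a 3)\<^sup>2" using assms(1-3) by simp
  ultimately have "sqrt (delta3 a) < beta_poly a"
    unfolding delta3_eq_beta_poly by (intro real_less_lsqrt) auto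
  then show ?thesis unfolding beta3_eq_beta_poly by simp
qed

lemma g3_intermediate:
  assumes "a k < sqrt ((a i)\<^sup>2 + (a j)\<^sup>2 - 1)" and "alpha3 a i j < a k"
  shows "g3 a i j k = beta3 a / (8 * (a k)\<^sup>2)"
  using assms unfolding g3_def by simp

lemma E2_res_eq_ln_g3:
  assumes "0 < a i" "0 < g3 a i j k" "0 < g3 a i k j"
  shows "E2_res a i j k = ln ((a i)\<^sup>2 / (g3 a i j k * g3 a i k j)) / 2"
  using assms by (simp add: E2_res_def E2_bip_def E2_two_def ln_div ln_mult ln_realpow)

lemma E2_res_intermediate:
  assumes "0 < a i" "0 < a j" "0 < a k" "0 < beta3 a"
    and "g3 a i j k = beta3 a / (8 * (a k)\<^sup>2)" "g3 a i k j = beta3 a / (8 * (a j)\<^sup>2)"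
  shows "E2_res a i j k = ln (64 * (a i)\<^sup>2 * (a j)\<^sup>2 * (a k)\<^sup>2 / (beta3 a)\<^sup>2) / 2"
proof -
  have "(a i)\<^sup>2 / (g3 a i j k * g3 a i k j) = 64 * (a i)\<^sup>2 * (a j)\<^sup>2 * (a k)\<^sup>2 / (beta3 a)\<^sup>2"
    using assms(1-4) unfolding assms(5,6) by (simp add: field_simps power2_eq_square)
  then show ?thesis using assms by (simp add: E2_res_eq_ln_g3)
qed

lemma prod_perm3:
  fixes f :: "nat \<Rightarrow> 'a :: comm_monoid_mult"
  assumes "is_perm3 i j k"
  shows "f i * f j * f k = f 1 * f 2 * f 3"
  using assms unfolding is_perm3_def by (auto simp: mult_ac)

lemma is_perm3_swaps:
  assumes "is_perm3 i j k"
  shows "is_perm3 j k i" and "is_perm3 i k j" and "is_perm3 k j i"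
  using assms unfolding is_perm3_def by auto

lemma strict_regime_bounds:
  fixes a :: "nat \<Rightarrow> real"
  assumes regime: "\<forall>i j k. is_perm3 i j k \<longrightarrow>
           \<bar>a i - a j\<bar> + 1 < a k \<and> a k < sqrt ((a i)\<^sup>2 + (a j)\<^sup>2 - 1)"
    and perm: "is_perm3 i j k"
  shows "1 < a k" and "a k + 1 < a i + a j" and "(a k)\<^sup>2 < (a i)\<^sup>2 + (a j)\<^sup>2 - 1"
proof -
  have ijk: "\<bar>a i - a j\<bar> + 1 < a k" "a k < sqrt ((a i)\<^sup>2 + (a j)\<^sup>2 - 1)"
    using regime perm by blast+
  then show "1 < a k" by linarith
  then show "(a k)\<^sup>2 < (a i)\<^sup>2 + (a j)\<^sup>2 - 1"
    using ijk(2) real_sqrt_less_iff[of "(a k)\<^sup>2"] by simp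
  have "\<bar>a k - a j\<bar> + 1 < a i" using regime is_perm3_swaps(3)[OF perm] by blast
  then show "a k + 1 < a i + a j" by linarith
qed

theorem mainTheorem8:
  fixes a :: "nat \<Rightarrow> real"
  assumes "pure3_params a"
    and "\<forall>i j k. is_perm3 i j k \<longrightarrow>
           \<bar>a i - a j\<bar> + 1 < a k \<and> a k < sqrt ((a i)\<^sup>2 + (a j)\<^sup>2 - 1)"
  shows "(\<forall>i j k. is_perm3 i j k \<longrightarrow> a k > alpha3 a i j)
       \<and> (\<forall>i j k. is_perm3 i j k \<longrightarrow>
            E2_res a i j k = ln (64 * (a 1)\<^sup>2 * (a 2)\<^sup>2 * (a 3)\<^sup>2 / (beta3 a)\<^sup>2) / 2)"
proof -
  \<comment> \<open>The hypothesis pure3_params is implied by the strict regime and not needed.\<close>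
  note bounds = strict_regime_bounds[OF assms(2)]
  have alpha: "alpha3 a i j < a k" if "is_perm3 i j k" for i j k
    using bounds[OF is_perm3_swaps(1)[OF that]] bounds[OF is_perm3_swaps(2)[OF that]] bounds[OF that]
    by (intro alpha3_less) (auto simp: abs_less_iff)
  have g: "g3 a i j k = beta3 a / (8 * (a k)\<^sup>2)" if "is_perm3 i j k" for i j k
    using assms(2) that alpha[OF that] by (blast intro: g3_intermediate)
  have "0 < beta3 a"
    using bounds[of 2 3 1] bounds[of 1 3 2] bounds[of 1 2 3] by (intro beta3_pos) (auto simp: is_perm3_def)
  have "E2_res a i j k = ln (64 * (a 1)\<^sup>2 * (a 2)\<^sup>2 * (a 3)\<^sup>2 / (beta3 a)\<^sup>2) / 2"
    if ijk: "is_perm3 i j k" for i j k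
  proof -
    have "0 < a i" "0 < a j" "0 < a k"
      using bounds(1)[OF is_perm3_swaps(1)[OF ijk]] bounds(1)[OF is_perm3_swaps(2)[OF ijk]]
        bounds(1)[OF ijk] by linarith+
    then have "E2_res a i j k = ln (64 * ((a i)\<^sup>2 * (a j)\<^sup>2 * (a k)\<^sup>2) / (beta3 a)\<^sup>2) / 2"
      using \<open>0 < beta3 a\<close> g[OF ijk] g[OF is_perm3_swaps(2)[OF ijk]]
      by (simp add: E2_res_intermediate mult.assoc)
    then show ?thesis using prod_perm3[OF ijk, of "\<lambda>n. (a n)\<^sup>2"] by (simp add: mult.assoc)
  qed
  with alpha show ?thesis by blast
qed

end
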